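(* Let $f\in C^1(\mathbb{R})$ with $f(0)=0$, $m>0$, $\omega\in(0,m)$, and let $(v,u)$ be real-valued, exponentially decaying solutions of $\omega v=\partial_x u+[m-f(v^2-u^2)]v$, $\omega u=-\partial_x v-[m-f(v^2-u^2)]u$ on $\mathbb{R}$. Let $$\mathcal{A}_\omega=\begin{pmatrix}0&L_-(\omega)\\-L_+(\omega)&0\end{pmatrix},\quad L_-(\omega)=\begin{pmatrix}m-f(\tau)-\omega&\partial_x\\-\partial_x&-m+f(\tau)-\omega\end{pmatrix},\quad L_+(\omega)=L_-(\omega)-2f'(\tau)\begin{pmatrix}v^2&-vu\\-vu&u^2\end{pmatrix},$$ with $\tau=v^2-u^2$, acting on $L^2(\mathbb{R},\mathbb{C}^4)$. Then $\pm2\omega i$ are eigenvalues of $\mathcal{A}_\omega$ (with eigenfunctions in $H^1(\mathbb{R},\mathbb{C}^4)$), for any such nonlinearity $f$.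
   Context: $\mathcal{A}_\omega$ is the linearization of the 1D Soler model $i\partial_t\psi_1=\partial_x\psi_2+(m-f(|\psi_1|^2-|\psi_2|^2))\psi_1$, $i\partial_t\psi_2=-\partial_x\psi_1-(m-f(|\psi_1|^2-|\psi_2|^2))\psi_2$ at the solitary wave $(v,u)^Te^{-i\omega t}$, written for $R=(\mathrm{Re}\rho,\mathrm{Im}\rho)\in\mathbb{R}^4$ where $\psi=((v,u)^T+\rho)e^{-i\omega t}$, and complexified. *)

theory Defs
  imports "HOL-Analysis.Analysis"
begin

text \<open>The linearized operator A_omega applied to a function
  Psi = (Psi1,Psi2,Psi3,Psi4) : R -> C^4 (components ordered as
  (Re rho1, Re rho2, Im rho1, Im rho2), complexified), evaluated at x.
  A_omega = [[0, L_-],[-L_+, 0]], where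
  L_-(a,b) = ((m - f tau - omega) a + b', -a' + (-m + f tau - omega) b),
  L_+ = L_- - 2 f'(tau) [[v^2, -v u],[-v u, u^2]], tau = v^2 - u^2.
  Here fd is the derivative of f.\<close>

definition A_omega ::
  "(real \<Rightarrow> real) \<Rightarrow> (real \<Rightarrow> real) \<Rightarrow> real \<Rightarrow> real \<Rightarrow>
   (real \<Rightarrow> real) \<Rightarrow> (real \<Rightarrow> real) \<Rightarrow> (real \<Rightarrow> complex^4) \<Rightarrow> real \<Rightarrow> complex^4"
where
  "A_omega f fd m \<omega> v u \<Psi> x =
    (let P = \<Psi> x; D = vector_derivative \<Psi> (at x);
         t = (v x)^2 - (u x)^2;
         c = complex_of_real (m - f t);
         w = complex_of_real \<omega>;
         g = complex_of_real (2 * fd t);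
         vv = complex_of_real ((v x)^2);
         uu = complex_of_real ((u x)^2);
         vu = complex_of_real (v x * u x)
     in vector
       [ (c - w) * P$3 + D$4,
         - D$3 + (- c - w) * P$4,
         - ((c - w) * P$1 + D$2 - g * (vv * P$1 - vu * P$2)),
         - (- D$1 + (- c - w) * P$2 - g * (- vu * P$1 + uu * P$2)) ])"

definition H1_eigenvalue ::
  "(real \<Rightarrow> real) \<Rightarrow> (real \<Rightarrow> real) \<Rightarrow> real \<Rightarrow> real \<Rightarrow>
   (real \<Rightarrow> real) \<Rightarrow> (real \<Rightarrow> real) \<Rightarrow> complex \<Rightarrow> bool"
where
  "H1_eigenvalue f fd m \<omega> v u lam \<longleftrightarrow>
    (\<exists>\<Psi> :: real \<Rightarrow> complex^4.
       (\<forall>x. \<Psi> differentiable (at x)) \<and>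
       (\<lambda>x. (norm (\<Psi> x))^2) integrable_on UNIV \<and>
       (\<lambda>x. (norm (vector_derivative \<Psi> (at x)))^2) integrable_on UNIV \<and>
       \<Psi> \<noteq> (\<lambda>x. 0) \<and>
       (\<forall>x. A_omega f fd m \<omega> v u \<Psi> x = lam *s \<Psi> x))"

end

theory Submission
  imports Defs
begin

text \<open>Put \<open>\<phi> = (u, v)\<close>, the profile with its components swapped. The profile equations say
  exactly that \<open>L\<^sub>-(\<omega>) \<phi> = -2\<omega> \<phi>\<close>, and the correction term of \<open>L\<^sub>+(\<omega>)\<close> annihilates \<open>\<phi>\<close>
  because \<open>(v\<^sup>2, -vu; -vu, u\<^sup>2) (u, v) = 0\<close>, so also \<open>L\<^sub>+(\<omega>) \<phi> = -2\<omega> \<phi>\<close>. Hence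
  \<open>\<A>\<^sub>\<omega> (\<phi>, c \<phi>) = (-2\<omega> c \<phi>, 2\<omega> \<phi>) = -2\<omega> c (\<phi>, c \<phi>)\<close> whenever \<open>c\<^sup>2 = -1\<close>, and \<open>c = \<mp>i\<close>
  gives the eigenvalues \<open>\<plusminus>2\<omega>i\<close>. The eigenfunction is in \<open>H\<^sup>1\<close> because \<open>\<phi>\<close> decays
  exponentially and, by the profile equations, \<open>|\<phi>'| \<le> K |\<phi>|\<close>.\<close>

lemma vector_4 [simp]:
  "(vector [x, y, z, w] :: 'a::zero^4) $ 1 = x"
  "(vector [x, y, z, w] :: 'a::zero^4) $ 2 = y"
  "(vector [x, y, z, w] :: 'a::zero^4) $ 3 = z"
  "(vector [x, y, z, w] :: 'a::zero^4) $ 4 = w"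
  unfolding vector_def by simp_all

lemma exp_minus_abs_integrable:
  fixes k :: real
  assumes "k > 0"
  shows "(\<lambda>x. exp (- k * \<bar>x\<bar>)) integrable_on UNIV"
proof (rule measurable_bounded_by_integrable_imp_integrable)
  define h where "h x = (if x \<in> {0..} then exp (- k * x) else 0)" for x :: real
  have h_int: "h integrable_on UNIV"
    unfolding h_def [abs_def] integrable_restrict_UNIV
    using integrable_on_exp_minus_to_infinity [OF assms] by simp
  then have "h absolutely_integrable_on UNIV"
    by (rule nonnegative_absolutely_integrable_1) (simp add: h_def)
  then have "(\<lambda>x. h (- x)) integrable_on UNIV"
    using has_absolute_integral_reflect_real [of UNIV UNIV h] absolutely_integrable_on_def by auto
  with h_int show "(\<lambda>x. h x + h (- x)) integrable_on UNIV"
    by (rule integrable_add)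
  show "norm (exp (- k * \<bar>x\<bar>)) \<le> h x + h (- x)" for x
    by (cases "x \<ge> 0") (auto simp: h_def)
  show "(\<lambda>x. exp (- k * \<bar>x\<bar>)) \<in> borel_measurable (lebesgue_on UNIV)"
    by (intro continuous_imp_measurable_on_sets_lebesgue continuous_intros) auto
qed simp

lemma square_integrable_of_exp_decay:
  fixes g :: "real \<Rightarrow> 'a::real_normed_vector"
  assumes "continuous_on UNIV g" and "\<kappa> > 0" and "\<And>x. norm (g x) \<le> C * exp (- \<kappa> * \<bar>x\<bar>)"
  shows "(\<lambda>x. (norm (g x))\<^sup>2) integrable_on UNIV"
proof (rule measurable_bounded_by_integrable_imp_integrable)
  show "(\<lambda>x. (norm (g x))\<^sup>2) \<in> borel_measurable (lebesgue_on UNIV)"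
    by (intro continuous_imp_measurable_on_sets_lebesgue continuous_intros assms(1)) auto
  show "(\<lambda>x. C\<^sup>2 * exp (- (2 * \<kappa>) * \<bar>x\<bar>)) integrable_on UNIV"
    using integrable_on_cmult_left [OF exp_minus_abs_integrable [of "2 * \<kappa>"]] assms(2) by simp
  show "norm ((norm (g x))\<^sup>2) \<le> C\<^sup>2 * exp (- (2 * \<kappa>) * \<bar>x\<bar>)" for x
  proof -
    have "(norm (g x))\<^sup>2 \<le> (C * exp (- \<kappa> * \<bar>x\<bar>))\<^sup>2"
      using assms(3) by (intro power_mono) auto
    also have "\<dots> = C\<^sup>2 * exp (- (2 * \<kappa>) * \<bar>x\<bar>)"
      by (simp add: power_mult_distrib power2_eq_square exp_add [symmetric])
    finally show ?thesis by simp
  qed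
qed simp

lemma exp_decay_imp_bounded:
  fixes g :: "real \<Rightarrow> real"
  assumes "\<kappa> > 0" and decay: "\<And>x. \<bar>g x\<bar> \<le> C * exp (- \<kappa> * \<bar>x\<bar>)"
  shows "\<bar>g x\<bar> \<le> C"
proof -
  have "0 \<le> C * exp (- \<kappa> * \<bar>x\<bar>)"
    using decay [of x] by linarith
  then have "C * exp (- \<kappa> * \<bar>x\<bar>) \<le> C"
    using assms(1) by (intro mult_left_le) (simp_all add: zero_le_mult_iff)
  with decay [of x] show ?thesis by linarith
qed

definition stacked_mode ::
  "complex \<Rightarrow> (real \<Rightarrow> real) \<Rightarrow> (real \<Rightarrow> real) \<Rightarrow> real \<Rightarrow> complex^4"
  where "stacked_mode c p q x = p x *\<^sub>R vector [1, 0, c, 0] + q x *\<^sub>R vector [0, 1, 0, c]"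

lemma stacked_mode_nth [simp]:
  "stacked_mode c p q x $ 1 = of_real (p x)"
  "stacked_mode c p q x $ 2 = of_real (q x)"
  "stacked_mode c p q x $ 3 = c * of_real (p x)"
  "stacked_mode c p q x $ 4 = c * of_real (q x)"
  unfolding stacked_mode_def vector_add_component vector_scaleR_component
  by (simp_all add: scaleR_conv_of_real)

lemma stacked_mode_has_vector_derivative:
  assumes "(p has_real_derivative p' x) (at x)" and "(q has_real_derivative q' x) (at x)"
  shows "(stacked_mode c p q has_vector_derivative stacked_mode c p' q' x) (at x)"
  unfolding stacked_mode_def [abs_def]
  by (intro has_vector_derivative_add has_vector_derivative_scaleR[OF _ has_vector_derivative_const,
        simplified] assms)

lemma continuous_on_stacked_mode:
  "continuous_on S p \<Longrightarrow> continuous_on S q \<Longrightarrow> continuous_on S (stacked_mode c p q)"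
  unfolding stacked_mode_def [abs_def] by (intro continuous_intros)

lemma norm_stacked_mode:
  "norm (stacked_mode c p q x) = sqrt (1 + (cmod c)\<^sup>2) * sqrt ((p x)\<^sup>2 + (q x)\<^sup>2)"
  unfolding norm_vec_def L2_set_def sum_4
  by (simp add: norm_mult power_mult_distrib real_sqrt_mult [symmetric] algebra_simps)

lemma norm_stacked_mode_le:
  "norm (stacked_mode c p q x) \<le> sqrt (1 + (cmod c)\<^sup>2) * (\<bar>p x\<bar> + \<bar>q x\<bar>)"
  unfolding norm_stacked_mode by (intro mult_left_mono sqrt_sum_squares_le_sum_abs) simp

lemma stacked_mode_square_integrable:
  assumes "continuous_on UNIV p" and "continuous_on UNIV q" and "\<kappa> > 0"
      and decay: "\<And>x. \<bar>p x\<bar> + \<bar>q x\<bar> \<le> C * exp (- \<kappa> * \<bar>x\<bar>)"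
  shows "(\<lambda>x. (norm (stacked_mode c p q x))\<^sup>2) integrable_on UNIV"
proof (rule square_integrable_of_exp_decay)
  show "continuous_on UNIV (stacked_mode c p q)"
    using assms(1,2) by (rule continuous_on_stacked_mode)
  show "norm (stacked_mode c p q x) \<le> (sqrt (1 + (cmod c)\<^sup>2) * C) * exp (- \<kappa> * \<bar>x\<bar>)" for x
  proof -
    have "norm (stacked_mode c p q x) \<le> sqrt (1 + (cmod c)\<^sup>2) * (\<bar>p x\<bar> + \<bar>q x\<bar>)"
      by (rule norm_stacked_mode_le)
    also have "\<dots> \<le> sqrt (1 + (cmod c)\<^sup>2) * (C * exp (- \<kappa> * \<bar>x\<bar>))"
      using decay by (rule mult_left_mono) simp
    finally show ?thesis
      by (simp only: mult.assoc)
  qed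
qed (rule assms(3))

lemma profile_derivative_eqs:
  fixes f v u v' u' :: "real \<Rightarrow> real" and m \<omega> :: real
  assumes eq1: "\<And>x. \<omega> * v x = u' x + (m - f ((v x)\<^sup>2 - (u x)\<^sup>2)) * v x"
      and eq2: "\<And>x. \<omega> * u x = - v' x - (m - f ((v x)\<^sup>2 - (u x)\<^sup>2)) * u x"
  shows "u' = (\<lambda>x. (\<omega> - m + f ((v x)\<^sup>2 - (u x)\<^sup>2)) * v x)"
    and "v' = (\<lambda>x. - ((\<omega> + m - f ((v x)\<^sup>2 - (u x)\<^sup>2)) * u x))"
proof -
  show "u' = (\<lambda>x. (\<omega> - m + f ((v x)\<^sup>2 - (u x)\<^sup>2)) * v x)"
  proof
    show "u' x = (\<omega> - m + f ((v x)\<^sup>2 - (u x)\<^sup>2)) * v x" for x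
      using eq1 [of x] by (simp add: algebra_simps)
  qed
  show "v' = (\<lambda>x. - ((\<omega> + m - f ((v x)\<^sup>2 - (u x)\<^sup>2)) * u x))"
  proof
    show "v' x = - ((\<omega> + m - f ((v x)\<^sup>2 - (u x)\<^sup>2)) * u x)" for x
      using eq2 [of x] by (simp add: algebra_simps)
  qed
qed

lemma profile_derivative_bound:
  fixes f v u v' u' :: "real \<Rightarrow> real" and m \<omega> B :: real
  assumes f_cont: "continuous_on UNIV f"
      and bounded: "\<And>x. \<bar>v x\<bar> + \<bar>u x\<bar> \<le> B"
      and eq1: "\<And>x. \<omega> * v x = u' x + (m - f ((v x)\<^sup>2 - (u x)\<^sup>2)) * v x"
      and eq2: "\<And>x. \<omega> * u x = - v' x - (m - f ((v x)\<^sup>2 - (u x)\<^sup>2)) * u x"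
  shows "\<exists>K \<ge> 0. \<forall>x. \<bar>u' x\<bar> + \<bar>v' x\<bar> \<le> K * (\<bar>v x\<bar> + \<bar>u x\<bar>)"
proof -
  have "bounded (f ` {- B\<^sup>2..B\<^sup>2})"
    by (intro compact_imp_bounded compact_continuous_image continuous_on_subset [OF f_cont]) auto
  then obtain M where M: "\<And>t. t \<in> {- B\<^sup>2..B\<^sup>2} \<Longrightarrow> \<bar>f t\<bar> \<le> M"
    unfolding bounded_iff by (auto simp del: atLeastAtMost_iff)
  have tau: "(v x)\<^sup>2 - (u x)\<^sup>2 \<in> {- B\<^sup>2..B\<^sup>2}" for x
  proof -
    have "\<bar>v x\<bar> \<le> \<bar>B\<bar>" "\<bar>u x\<bar> \<le> \<bar>B\<bar>"
      using bounded [of x] by linarith+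
    then have "(v x)\<^sup>2 \<le> B\<^sup>2" "(u x)\<^sup>2 \<le> B\<^sup>2"
      by (simp_all add: abs_le_square_iff)
    then show ?thesis
      unfolding atLeastAtMost_iff using zero_le_power2 [of "u x"] zero_le_power2 [of "v x"]
      by linarith
  qed
  define K where "K = \<bar>\<omega>\<bar> + \<bar>m\<bar> + M"
  have coeff_bound: "\<bar>\<omega> - m + f ((v x)\<^sup>2 - (u x)\<^sup>2)\<bar> \<le> K"
    "\<bar>\<omega> + m - f ((v x)\<^sup>2 - (u x)\<^sup>2)\<bar> \<le> K" for x
    using M [OF tau [of x]] unfolding K_def by linarith+
  have "\<bar>u' x\<bar> + \<bar>v' x\<bar> \<le> K * (\<bar>v x\<bar> + \<bar>u x\<bar>)" for x
  proof -
    have "\<bar>u' x\<bar> \<le> K * \<bar>v x\<bar>" "\<bar>v' x\<bar> \<le> K * \<bar>u x\<bar>"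
      using coeff_bound [of x]
      unfolding profile_derivative_eqs [where f = f and u = u and v = v and u' = u' and v' = v',
          OF eq1 eq2]
      by (simp_all add: abs_mult mult_right_mono)
    then show ?thesis by (simp add: distrib_left)
  qed
  moreover have "K \<ge> 0"
    using coeff_bound(1) [of 0] by linarith
  ultimately show ?thesis by blast
qed

lemma A_omega_stacked_profile_eigen:
  fixes f fd v u v' u' :: "real \<Rightarrow> real" and m \<omega> :: real
  assumes c: "c\<^sup>2 = -1"
      and v_deriv: "(v has_real_derivative v' x) (at x)"
      and u_deriv: "(u has_real_derivative u' x) (at x)"
      and eq1: "\<omega> * v x = u' x + (m - f ((v x)\<^sup>2 - (u x)\<^sup>2)) * v x"
      and eq2: "\<omega> * u x = - v' x - (m - f ((v x)\<^sup>2 - (u x)\<^sup>2)) * u x"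
  shows "A_omega f fd m \<omega> v u (stacked_mode c u v) x
           = (- 2 * complex_of_real \<omega> * c) *s stacked_mode c u v x"
proof -
  let ?F = "complex_of_real (f ((v x)\<^sup>2 - (u x)\<^sup>2))"
  have D: "vector_derivative (stacked_mode c u v) (at x) = stacked_mode c u' v' x"
    by (rule vector_derivative_at
        [OF stacked_mode_has_vector_derivative [where p' = u' and q' = v', OF u_deriv v_deriv]])
  have u': "complex_of_real (u' x) = (of_real \<omega> - of_real m + ?F) * of_real (v x)"
    and v': "complex_of_real (v' x) = - (of_real \<omega> + of_real m - ?F) * of_real (u x)"
    using arg_cong [OF eq1, of complex_of_real] arg_cong [OF eq2, of complex_of_real]
    by (simp_all add: algebra_simps)
  have cc: "c * (c * z) = - z" for z
    using c by (simp add: power2_eq_square flip: mult.assoc)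
  show ?thesis
    unfolding A_omega_def Let_def D vec_eq_iff forall_4
    by (simp add: u' v' algebra_simps cc power2_eq_square)
qed

lemma H1_eigenvalue_stacked_profile:
  fixes f fd v u v' u' :: "real \<Rightarrow> real" and m \<omega> :: real
  assumes c: "c\<^sup>2 = -1"
      and f_cont: "continuous_on UNIV f"
      and v_deriv: "\<And>x. (v has_real_derivative v' x) (at x)"
      and u_deriv: "\<And>x. (u has_real_derivative u' x) (at x)"
      and eq1: "\<And>x. \<omega> * v x = u' x + (m - f ((v x)\<^sup>2 - (u x)\<^sup>2)) * v x"
      and eq2: "\<And>x. \<omega> * u x = - v' x - (m - f ((v x)\<^sup>2 - (u x)\<^sup>2)) * u x"
      and decay: "\<exists>C \<kappa>. \<kappa> > 0 \<and> (\<forall>x. \<bar>v x\<bar> + \<bar>u x\<bar> \<le> C * exp (- \<kappa> * \<bar>x\<bar>))"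
      and nontrivial: "\<exists>x. v x \<noteq> 0 \<or> u x \<noteq> 0"
  shows "H1_eigenvalue f fd m \<omega> v u (- 2 * complex_of_real \<omega> * c)"
proof -
  obtain C \<kappa> where \<kappa>: "\<kappa> > 0" and C: "\<And>x. \<bar>v x\<bar> + \<bar>u x\<bar> \<le> C * exp (- \<kappa> * \<bar>x\<bar>)"
    using decay by blast
  have "\<bar>v x\<bar> + \<bar>u x\<bar> \<le> C" for x
    using exp_decay_imp_bounded [of \<kappa> "\<lambda>x. \<bar>v x\<bar> + \<bar>u x\<bar>"] \<kappa> C by simp
  then obtain K where "K \<ge> 0" and K: "\<And>x. \<bar>u' x\<bar> + \<bar>v' x\<bar> \<le> K * (\<bar>v x\<bar> + \<bar>u x\<bar>)"
    using profile_derivative_bound [where f = f and u = u and v = v and u' = u' and v' = v',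
        OF f_cont _ eq1 eq2] by blast
  define \<Psi> where "\<Psi> = stacked_mode c u v"
  have \<Psi>_deriv: "(\<Psi> has_vector_derivative stacked_mode c u' v' x) (at x)" for x
    unfolding \<Psi>_def
    by (rule stacked_mode_has_vector_derivative [where p' = u' and q' = v', OF u_deriv v_deriv])
  have cont_v: "continuous_on UNIV v" and cont_u: "continuous_on UNIV u"
    using v_deriv u_deriv by (meson DERIV_isCont continuous_at_imp_continuous_on)+
  have cont_u': "continuous_on UNIV u'" and cont_v': "continuous_on UNIV v'"
    unfolding profile_derivative_eqs [where f = f and u = u and v = v and u' = u' and v' = v',
        OF eq1 eq2]
    by (auto intro!: continuous_intros continuous_on_compose2 [OF f_cont] cont_u cont_v)
  have "(\<lambda>x. (norm (\<Psi> x))\<^sup>2) integrable_on UNIV"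
    unfolding \<Psi>_def using cont_u cont_v \<kappa>
    by (rule stacked_mode_square_integrable [where C = C]) (metis C add.commute)
  moreover have "(\<lambda>x. (norm (vector_derivative \<Psi> (at x)))\<^sup>2) integrable_on UNIV"
    unfolding vector_derivative_at [OF \<Psi>_deriv] using cont_u' cont_v' \<kappa>
  proof (rule stacked_mode_square_integrable)
    show "\<bar>u' x\<bar> + \<bar>v' x\<bar> \<le> (K * C) * exp (- \<kappa> * \<bar>x\<bar>)" for x
    proof -
      have "\<bar>u' x\<bar> + \<bar>v' x\<bar> \<le> K * (\<bar>v x\<bar> + \<bar>u x\<bar>)"
        by (rule K)
      also have "\<dots> \<le> K * (C * exp (- \<kappa> * \<bar>x\<bar>))"
        using C \<open>K \<ge> 0\<close> by (rule mult_left_mono)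
      finally show ?thesis
        by (simp only: mult.assoc)
    qed
  qed
  moreover have "\<Psi> \<noteq> (\<lambda>x. 0)"
  proof
    assume "\<Psi> = (\<lambda>x. 0)"
    then have "\<Psi> x $ 1 = 0 \<and> \<Psi> x $ 2 = 0" for x
      by simp
    with nontrivial show False
      unfolding \<Psi>_def by simp
  qed
  moreover have "\<Psi> differentiable (at x)" for x
    using \<Psi>_deriv by (rule differentiableI_vector)
  moreover have "A_omega f fd m \<omega> v u \<Psi> x = (- 2 * complex_of_real \<omega> * c) *s \<Psi> x" for x
    unfolding \<Psi>_def using c v_deriv u_deriv eq1 eq2 by (rule A_omega_stacked_profile_eigen)
  ultimately show ?thesis
    unfolding H1_eigenvalue_def by blast
qed

theorem mainTheorem5:
  fixes f fd :: "real \<Rightarrow> real" and m \<omega> :: real and v u v' u' :: "real \<Rightarrow> real"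
  assumes f_deriv: "\<And>s. (f has_real_derivative fd s) (at s)"
      and fd_cont: "continuous_on UNIV fd"
      and f0: "f 0 = 0"
      and m_pos: "m > 0"
      and \<omega>_pos: "0 < \<omega>" and \<omega>_lt: "\<omega> < m"
      and v_deriv: "\<And>x. (v has_real_derivative v' x) (at x)"
      and u_deriv: "\<And>x. (u has_real_derivative u' x) (at x)"
      and eq1: "\<And>x. \<omega> * v x = u' x + (m - f ((v x)^2 - (u x)^2)) * v x"
      and eq2: "\<And>x. \<omega> * u x = - v' x - (m - f ((v x)^2 - (u x)^2)) * u x"
      and decay: "\<exists>C \<kappa>. \<kappa> > 0 \<and> (\<forall>x. \<bar>v x\<bar> + \<bar>u x\<bar> \<le> C * exp (- \<kappa> * \<bar>x\<bar>))"
      and nontrivial: "\<exists>x. v x \<noteq> 0 \<or> u x \<noteq> 0"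
  shows "H1_eigenvalue f fd m \<omega> v u (2 * complex_of_real \<omega> * \<i>)
       \<and> H1_eigenvalue f fd m \<omega> v u (- 2 * complex_of_real \<omega> * \<i>)"
proof -
  have f_cont: "continuous_on UNIV f"
    using f_deriv by (meson DERIV_isCont continuous_at_imp_continuous_on)
  have "H1_eigenvalue f fd m \<omega> v u (- 2 * complex_of_real \<omega> * c)" if "c\<^sup>2 = -1" for c
    using that f_cont v_deriv u_deriv eq1 eq2 decay nontrivial
    by (rule H1_eigenvalue_stacked_profile)
  from this [of "- \<i>"] this [of \<i>] show ?thesis
    by simp
qed

end
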